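(* Let $N\in\mathbb{N}$ and let $\mathbf{X}=(X_1,\ldots,X_N)$ be a random vector with independent coordinates, with joint density $f_{\mathbf{X}}(\mathbf{x})=\prod_{i=1}^N f_i(x_i)$. Let $y$ be a real-valued function with $\mathbb{E}[y(\mathbf{X})^2]<\infty$, and let $y(\mathbf{X})=\sum_{u\subseteq\{1,\ldots,N\}} y_u(\mathbf{X}_u)$ be its ANOVA dimensional decomposition (defined in the context). Suppose there are real constants $c>0$ and $q>1$ such that $\sigma_u^2:=\mathbb{E}[y_u^2(\mathbf{X}_u)]\le c\,q^{-|u|}$ for every nonempty $u\subseteq\{1,\ldots,N\}$. For $0\le S\le N$ let $\tilde{y}_S(\mathbf{X}):=\sum_{u\subseteq\{1,\ldots,N\},\,0\le|u|\le S} y_u(\mathbf{X}_u)$. Then $$\tilde{e}_S:=\mathbb{E}\big[(y(\mathbf{X})-\tilde{y}_S(\mathbf{X}))^2\big]\le c\sum_{s=S+1}^{N}\binom{N}{s}q^{-s}.$$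
   Context: For $u\subseteq\{1,\ldots,N\}$, $\mathbf{X}_u=(X_i)_{i\in u}$ (ordered by increasing index), $-u=\{1,\ldots,N\}\setminus u$, and $f_{\mathbf{X}_{-u}}(\mathbf{x}_{-u})=\prod_{i\notin u} f_i(x_i)$. The ANOVA dimensional decomposition components are defined recursively by $y_\emptyset=\int_{\mathbb{R}^N} y(\mathbf{x})f_{\mathbf{X}}(\mathbf{x})\,d\mathbf{x}$ and, for nonempty $u$, $y_u(\mathbf{X}_u)=\int_{\mathbb{R}^{N-|u|}} y(\mathbf{X}_u,\mathbf{x}_{-u})f_{\mathbf{X}_{-u}}(\mathbf{x}_{-u})\,d\mathbf{x}_{-u}-\sum_{v\subsetneq u} y_v(\mathbf{X}_v)$; then $y(\mathbf{X})=\sum_{u\subseteq\{1,\ldots,N\}}y_u(\mathbf{X}_u)$. *)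

theory Defs
  imports "HOL-Probability.Probability"
begin

definition partial_int ::
  "nat \<Rightarrow> (nat \<Rightarrow> real measure) \<Rightarrow> ((nat \<Rightarrow> real) \<Rightarrow> real) \<Rightarrow> nat set \<Rightarrow> (nat \<Rightarrow> real) \<Rightarrow> real" where
  "partial_int N M y u x =
     integral\<^sup>L (PiM ({1..N} - u) M) (\<lambda>z. y (merge u ({1..N} - u) (x, z)))"

function anova ::
  "nat \<Rightarrow> (nat \<Rightarrow> real measure) \<Rightarrow> ((nat \<Rightarrow> real) \<Rightarrow> real) \<Rightarrow> nat set \<Rightarrow> (nat \<Rightarrow> real) \<Rightarrow> real" where
  "anova N M y u x =
     (if finite u then partial_int N M y u x - (\<Sum>v\<in>{v. v \<subset> u}. anova N M y v x) else 0)"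
  by auto
termination
  by (relation "Wellfounded.measure (\<lambda>(N, M, y, u, x). card u)")
     (auto intro: psubset_card_mono)

end

theory Submission
  imports Defs
begin

text \<open>The ANOVA components are mutually orthogonal in \<open>L\<^sup>2\<close>: integrating \<open>y\<^sub>u\<close> over a
coordinate \<open>i \<in> u\<close> gives zero (by induction on \<open>u\<close>, using the tower property of partial
integrals), while \<open>y\<^sub>w\<close> with \<open>i \<notin> w\<close> does not depend on that coordinate. Hence the truncation
error is exactly the sum of \<open>\<sigma>\<^sub>u\<^sup>2\<close> over \<open>|u| > S\<close>, and grouping the subsets by cardinality
turns the assumed bounds \<open>\<sigma>\<^sub>u\<^sup>2 \<le> c q powr -|u|\<close> into the binomial sum.\<close>

definition square_integrable :: "'a measure \<Rightarrow> ('a \<Rightarrow> real) \<Rightarrow> bool" where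
  "square_integrable Q f \<longleftrightarrow> f \<in> borel_measurable Q \<and> integrable Q (\<lambda>x. (f x)\<^sup>2)"

lemma integrable_mult_square_integrable:
  assumes "square_integrable Q f" "square_integrable Q g"
  shows "integrable Q (\<lambda>x. f x * g x)"
proof (rule Bochner_Integration.integrable_bound[of _ "\<lambda>x. (f x)\<^sup>2 + (g x)\<^sup>2"])
  have "\<bar>f x * g x\<bar> \<le> (f x)\<^sup>2 + (g x)\<^sup>2" for x
    unfolding abs_mult
    using sum_squares_bound[of "\<bar>f x\<bar>" "\<bar>g x\<bar>"] mult_nonneg_nonneg[OF abs_ge_zero abs_ge_zero, of "f x" "g x"]
    by (simp only: power2_abs)
  then show "AE x in Q. norm (f x * g x) \<le> norm ((f x)\<^sup>2 + (g x)\<^sup>2)"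
    by simp
qed (use assms in \<open>auto simp: square_integrable_def\<close>)

lemma square_integrable_diff:
  assumes "square_integrable Q f" "square_integrable Q g"
  shows "square_integrable Q (\<lambda>x. f x - g x)"
proof -
  have "(\<lambda>x. (f x - g x)\<^sup>2) = (\<lambda>x. (f x)\<^sup>2 + (g x)\<^sup>2 - 2 * (f x * g x))"
    by (simp add: fun_eq_iff power2_eq_square algebra_simps)
  then show ?thesis
    using assms integrable_mult_square_integrable[OF assms] by (auto simp: square_integrable_def)
qed

lemma square_integrable_add:
  assumes "square_integrable Q f" "square_integrable Q g"
  shows "square_integrable Q (\<lambda>x. f x + g x)"
proof -
  have "(\<lambda>x. (f x + g x)\<^sup>2) = (\<lambda>x. (f x)\<^sup>2 + (g x)\<^sup>2 + 2 * (f x * g x))"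
    by (simp add: fun_eq_iff power2_eq_square algebra_simps)
  then show ?thesis
    using assms integrable_mult_square_integrable[OF assms] by (auto simp: square_integrable_def)
qed

lemma square_integrable_sum:
  "finite V \<Longrightarrow> (\<And>v. v \<in> V \<Longrightarrow> square_integrable Q (f v)) \<Longrightarrow>
    square_integrable Q (\<lambda>x. \<Sum>v\<in>V. f v x)"
  by (induction V rule: finite_induct) (auto simp: square_integrable_def[of _ "\<lambda>_. 0"] square_integrable_add)

lemma (in prob_space) power2_expectation_le:
  assumes "square_integrable M h"
  shows "(expectation h)\<^sup>2 \<le> expectation (\<lambda>z. (h z)\<^sup>2)"
proof -
  have "integrable M h"
    using assms square_integrable_imp_integrable by (auto simp: square_integrable_def)
  then have "variance h = expectation (\<lambda>z. (h z)\<^sup>2) - (expectation h)\<^sup>2"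
    using assms variance_eq by (auto simp: square_integrable_def)
  then show ?thesis
    using variance_positive[of h] by simp
qed

definition depends_only_on :: "'i set \<Rightarrow> (('i \<Rightarrow> 'a) \<Rightarrow> 'b) \<Rightarrow> bool" where
  "depends_only_on u f \<longleftrightarrow> (\<forall>x x'. (\<forall>i\<in>u. x i = x' i) \<longrightarrow> f x = f x')"

lemma depends_only_onD: "depends_only_on u f \<Longrightarrow> (\<And>i. i \<in> u \<Longrightarrow> x i = x' i) \<Longrightarrow> f x = f x'"
  unfolding depends_only_on_def by blast

lemma depends_only_on_mono: "depends_only_on u f \<Longrightarrow> u \<subseteq> w \<Longrightarrow> depends_only_on w f"
  unfolding depends_only_on_def by blast

lemma finite_psubsets: "finite u \<Longrightarrow> finite {v. v \<subset> u}"
  by (rule finite_subset[of _ "Pow u"]) auto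

lemma sum_psubsets_avoiding:
  assumes "finite u" "i \<in> u"
  shows "(\<Sum>v | v \<subset> u. if i \<in> v then 0 else g v) = (\<Sum>v | v \<subseteq> u - {i}. g v)"
proof -
  have "(\<Sum>v | v \<subset> u. if i \<in> v then 0 else g v) = (\<Sum>v | v \<subset> u. if i \<notin> v then g v else 0)"
    by (intro sum.cong) auto
  also have "\<dots> = (\<Sum>v \<in> {v \<in> {v. v \<subset> u}. i \<notin> v}. g v)"
    by (rule sum.inter_filter[OF finite_psubsets[OF assms(1)], symmetric])
  also have "{v \<in> {v. v \<subset> u}. i \<notin> v} = {v. v \<subseteq> u - {i}}"
    using assms(2) by auto
  finally show ?thesis .
qed

lemma sum_subsets_card_gt:
  fixes h :: "nat \<Rightarrow> 'a::comm_semiring_1"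
  assumes "finite I"
  shows "(\<Sum>u | u \<subseteq> I \<and> \<not> card u \<le> S. h (card u)) = (\<Sum>s=S+1..card I. of_nat (card I choose s) * h s)"
proof -
  define U where "U = {u. u \<subseteq> I \<and> \<not> card u \<le> S}"
  have "finite U"
    unfolding U_def using assms by (auto intro: finite_subset[of _ "Pow I"])
  moreover have "card ` U \<subseteq> {S+1..card I}"
    unfolding U_def using assms by (auto intro: card_mono)
  ultimately have "(\<Sum>u\<in>U. h (card u)) = (\<Sum>s=S+1..card I. \<Sum>u | u \<in> U \<and> card u = s. h (card u))"
    by (intro sum.group[symmetric]) auto
  also have "\<dots> = (\<Sum>s=S+1..card I. of_nat (card I choose s) * h s)"
  proof (rule sum.cong[OF refl])
    fix s assume "s \<in> {S+1..card I}"
    then have "{u. u \<in> U \<and> card u = s} = {u. u \<subseteq> I \<and> card u = s}"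
      unfolding U_def by auto
    then show "(\<Sum>u | u \<in> U \<and> card u = s. h (card u)) = of_nat (card I choose s) * h s"
      using n_subsets[OF assms, of s] by simp
  qed
  finally show ?thesis
    unfolding U_def .
qed

definition partial_integral ::
  "'i set \<Rightarrow> ('i \<Rightarrow> 'a measure) \<Rightarrow> (('i \<Rightarrow> 'a) \<Rightarrow> real) \<Rightarrow> 'i set \<Rightarrow> ('i \<Rightarrow> 'a) \<Rightarrow> real" where
  "partial_integral I M g u x = (\<integral>z. g (merge u (I - u) (x, z)) \<partial>PiM (I - u) M)"

lemma depends_only_on_partial_integral: "depends_only_on u (partial_integral I M g u)"
  unfolding depends_only_on_def partial_integral_def
  by (auto intro!: Bochner_Integration.integral_cong arg_cong[where f=g] simp: merge_def fun_eq_iff)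

lemma partial_integral_restrict: "partial_integral I M g u (restrict x u) = partial_integral I M g u x"
  by (rule depends_only_onD[OF depends_only_on_partial_integral]) simp

lemma partial_integral_mult_depends_only_on:
  assumes "depends_only_on u k"
  shows "partial_integral I M (\<lambda>x. h x * k x) u x = partial_integral I M h u x * k x"
proof -
  have "k (merge u (I - u) (x, z)) = k x" for z
    by (rule depends_only_onD[OF assms]) (simp add: merge_def)
  then show ?thesis
    unfolding partial_integral_def by simp
qed

text \<open>Coordinates range over the whole type, so partial integrals may be evaluated at
arbitrary points, not only at points of \<open>space (PiM I M)\<close>.\<close>

locale partial_integral_space = finite_product_prob_space M I for M :: "'i \<Rightarrow> 'a measure" and I +
  assumes space_M: "space (M i) = UNIV"
begin

lemma prob_space_PiM_any: "prob_space (PiM J M)"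
  by (rule prob_space_PiM[OF M.prob_space_axioms])

lemma integral_PiM_restrict:
  fixes F :: "('i \<Rightarrow> 'a) \<Rightarrow> real"
  assumes "finite K" "J \<subseteq> K" "F \<in> borel_measurable (PiM J M)"
  shows "integral\<^sup>L (PiM K M) (\<lambda>x. F (restrict x J)) = integral\<^sup>L (PiM J M) F"
  using integral_distr[OF measurable_restrict_subset[OF assms(2)] assms(3)] distr_restrict[OF assms(2,1)]
  by simp

lemma integrable_PiM_restrict:
  fixes F :: "('i \<Rightarrow> 'a) \<Rightarrow> real"
  assumes "finite K" "J \<subseteq> K" "F \<in> borel_measurable (PiM J M)"
  shows "integrable (PiM K M) (\<lambda>x. F (restrict x J)) \<longleftrightarrow> integrable (PiM J M) F"
  using integrable_distr_eq[OF measurable_restrict_subset[OF assms(2)] assms(3)] distr_restrict[OF assms(2,1)]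
  by simp

lemma AE_PiM_restrict:
  assumes "J \<subseteq> I" "AE x in PiM J M. P x"
  shows "AE x in PiM I M. P (restrict x J)"
  using AE_distrD[OF measurable_restrict_subset[OF assms(1)]] assms(2) distr_restrict[OF assms(1) finite_index]
  by metis

lemma measurable_merge_complement:
  assumes "u \<subseteq> I" "g \<in> borel_measurable (PiM I M)"
  shows "(\<lambda>(x, z). g (merge u (I - u) (x, z))) \<in> borel_measurable (PiM u M \<Otimes>\<^sub>M PiM (I - u) M)"
proof -
  have "u \<union> (I - u) = I"
    using assms(1) by auto
  then have "g \<in> borel_measurable (PiM (u \<union> (I - u)) M)"
    using assms(2) by simp
  from measurable_comp[OF measurable_merge this] show ?thesis
    by (simp add: comp_def case_prod_beta')
qed

lemma borel_measurable_partial_integral_PiM_subset: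
  assumes "u \<subseteq> I" "g \<in> borel_measurable (PiM I M)"
  shows "partial_integral I M g u \<in> borel_measurable (PiM u M)"
proof -
  interpret sigma_finite_measure "PiM (I - u) M"
    by (rule prob_space_imp_sigma_finite[OF prob_space_PiM_any])
  show ?thesis
    unfolding partial_integral_def
    by (rule borel_measurable_lebesgue_integral) (use measurable_merge_complement[OF assms] in simp)
qed

lemma borel_measurable_partial_integral:
  assumes "u \<subseteq> I" "g \<in> borel_measurable (PiM I M)"
  shows "partial_integral I M g u \<in> borel_measurable (PiM I M)"
  using measurable_comp[OF measurable_restrict_subset[OF assms(1)] borel_measurable_partial_integral_PiM_subset[OF assms]]
  by (simp add: comp_def partial_integral_restrict)

lemma
  fixes g :: "('i \<Rightarrow> 'a) \<Rightarrow> real"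
  assumes u: "u \<subseteq> I" and g: "integrable (PiM I M) g"
  shows AE_integrable_partial_integrand:
      "AE x in PiM I M. integrable (PiM (I - u) M) (\<lambda>z. g (merge u (I - u) (x, z)))"
    and integrable_partial_integral: "integrable (PiM I M) (partial_integral I M g u)"
    and integral_partial_integral:
      "integral\<^sup>L (PiM I M) (partial_integral I M g u) = integral\<^sup>L (PiM I M) g"
proof -
  have fin: "finite u" "finite (I - u)"
    using u finite_index finite_subset by auto
  have I: "u \<union> (I - u) = I"
    using u by auto
  interpret pair_sigma_finite "PiM u M" "PiM (I - u) M"
    by (intro pair_sigma_finite.intro prob_space_imp_sigma_finite prob_space_PiM_any)
  have gm: "g \<in> borel_measurable (PiM I M)"
    using g by auto
  have gi: "integrable (PiM (u \<union> (I - u)) M) g"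
    using g I by simp
  have pair: "integrable (PiM u M \<Otimes>\<^sub>M PiM (I - u) M) (\<lambda>p. g (merge u (I - u) p))"
    by (rule integrable_distr[OF measurable_merge]) (subst distr_merge[OF _ fin], auto simp del: Un_Diff_cancel intro: gi)
  show "AE x in PiM I M. integrable (PiM (I - u) M) (\<lambda>z. g (merge u (I - u) (x, z)))"
    using AE_PiM_restrict[OF u AE_integrable_fst'[OF pair]] by simp
  have "integrable (PiM u M) (partial_integral I M g u)"
    using integrable_fst'[OF pair] unfolding partial_integral_def by simp
  then show "integrable (PiM I M) (partial_integral I M g u)"
    using integrable_PiM_restrict[OF finite_index u borel_measurable_partial_integral_PiM_subset[OF u gm]]
    by (simp add: partial_integral_restrict)
  have "integral\<^sup>L (PiM I M) g = integral\<^sup>L (PiM u M) (partial_integral I M g u)"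
    using product_integral_fold[OF _ fin gi] I by (simp add: partial_integral_def[abs_def])
  also have "\<dots> = integral\<^sup>L (PiM I M) (partial_integral I M g u)"
    using integral_PiM_restrict[OF finite_index u borel_measurable_partial_integral_PiM_subset[OF u gm]]
    by (simp add: partial_integral_restrict)
  finally show "integral\<^sup>L (PiM I M) (partial_integral I M g u) = integral\<^sup>L (PiM I M) g" ..
qed

lemma partial_integral_diff:
  fixes f g :: "('i \<Rightarrow> 'a) \<Rightarrow> real"
  assumes "w \<subseteq> I" "integrable (PiM I M) f" "integrable (PiM I M) g"
  shows "AE x in PiM I M. partial_integral I M (\<lambda>x. f x - g x) w x =
    partial_integral I M f w x - partial_integral I M g w x"
  using AE_integrable_partial_integrand[OF assms(1,2)] AE_integrable_partial_integrand[OF assms(1,3)]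
  by eventually_elim (simp add: partial_integral_def)

lemma partial_integral_sum:
  fixes f :: "'b \<Rightarrow> ('i \<Rightarrow> 'a) \<Rightarrow> real"
  assumes "w \<subseteq> I" "finite V" "\<And>v. v \<in> V \<Longrightarrow> integrable (PiM I M) (f v)"
  shows "AE x in PiM I M. partial_integral I M (\<lambda>x. \<Sum>v\<in>V. f v x) w x =
    (\<Sum>v\<in>V. partial_integral I M (f v) w x)"
proof -
  have "AE x in PiM I M. \<forall>v\<in>V. integrable (PiM (I - w) M) (\<lambda>z. f v (merge w (I - w) (x, z)))"
    using assms AE_integrable_partial_integrand by (intro eventually_ball_finite) auto
  then show ?thesis
    by eventually_elim (simp add: partial_integral_def)
qed

lemma partial_integral_depends_only_on:
  assumes "depends_only_on w f"
  shows "partial_integral I M f w x = f x"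
proof -
  interpret prob_space "PiM (I - w) M"
    by (rule prob_space_PiM_any)
  have "f (merge w (I - w) (x, z)) = f x" for z
    by (rule depends_only_onD[OF assms]) (simp add: merge_def)
  then show ?thesis
    unfolding partial_integral_def by (simp add: prob_space)
qed

lemma power2_partial_integral_le:
  fixes g :: "('i \<Rightarrow> 'a) \<Rightarrow> real"
  assumes u: "u \<subseteq> I" and g: "square_integrable (PiM I M) g"
  shows "AE x in PiM I M. (partial_integral I M g u x)\<^sup>2 \<le> partial_integral I M (\<lambda>x. (g x)\<^sup>2) u x"
proof -
  have "AE x in PiM I M. integrable (PiM (I - u) M) (\<lambda>z. (g (merge u (I - u) (x, z)))\<^sup>2)"
    using AE_integrable_partial_integrand[OF u, of "\<lambda>x. (g x)\<^sup>2"] g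
    by (simp add: square_integrable_def)
  then show ?thesis
  proof eventually_elim
    case (elim x)
    interpret prob_space "PiM (I - u) M"
      by (rule prob_space_PiM_any)
    have "(\<lambda>z. g (merge u (I - u) (restrict x u, z))) \<in> borel_measurable (PiM (I - u) M)"
      using measurable_Pair2[OF measurable_merge_complement[OF u], of g "restrict x u"] g
      by (simp add: space_PiM space_M square_integrable_def)
    then have "square_integrable (PiM (I - u) M) (\<lambda>z. g (merge u (I - u) (x, z)))"
      using elim by (simp add: square_integrable_def)
    from power2_expectation_le[OF this] show ?case
      by (simp add: partial_integral_def)
  qed
qed

lemma square_integrable_partial_integral:
  assumes u: "u \<subseteq> I" and g: "square_integrable (PiM I M) g"
  shows "square_integrable (PiM I M) (partial_integral I M g u)"
  unfolding square_integrable_def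
proof
  show meas: "partial_integral I M g u \<in> borel_measurable (PiM I M)"
    using borel_measurable_partial_integral[OF u] g by (simp add: square_integrable_def)
  show "integrable (PiM I M) (\<lambda>x. (partial_integral I M g u x)\<^sup>2)"
  proof (rule Bochner_Integration.integrable_bound[OF integrable_partial_integral[OF u]])
    show "integrable (PiM I M) (\<lambda>x. (g x)\<^sup>2)"
      using g by (simp add: square_integrable_def)
    show "AE x in PiM I M. norm ((partial_integral I M g u x)\<^sup>2) \<le> norm (partial_integral I M (\<lambda>x. (g x)\<^sup>2) u x)"
      using power2_partial_integral_le[OF u g] by eventually_elim auto
  qed (use meas in measurable)
qed

text \<open>Pointwise, \<open>I - (a \<inter> b)\<close> splits into \<open>a - b\<close> and \<open>I - a\<close>, and Fubini applies on that split.\<close>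

lemma partial_integral_partial_integral:
  fixes g :: "('i \<Rightarrow> 'a) \<Rightarrow> real"
  assumes a: "a \<subseteq> I" and b: "b \<subseteq> I" and g: "integrable (PiM I M) g"
  shows "AE x in PiM I M. partial_integral I M (partial_integral I M g a) b x = partial_integral I M g (a \<inter> b) x"
  using AE_integrable_partial_integrand[OF le_infI1[OF a] g, of b]
proof eventually_elim
  case (elim x)
  have fin: "finite (a - b)" "finite (I - a)" "finite (I - b)"
    using finite_index a finite_subset by auto
  have split: "I - (a \<inter> b) = (a - b) \<union> (I - a)"
    using a by auto
  define G where "G w = g (merge (a \<inter> b) (I - (a \<inter> b)) (x, w))" for w
  define H where "H z = partial_integral I M g a (merge (a - b) (I - (a - b)) (z, x))" for z
  have G: "integrable (PiM ((a - b) \<union> (I - a)) M) G"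
    using elim unfolding G_def split[symmetric] by simp
  have "merge (a - b) (I - (a - b)) \<in> measurable (PiM (a - b) M \<Otimes>\<^sub>M PiM (I - (a - b)) M) (PiM I M)"
  proof -
    have "(a - b) \<union> (I - (a - b)) = I"
      using a by auto
    then show ?thesis
      using measurable_merge[of "a - b" "I - (a - b)" M] by simp
  qed
  from measurable_comp[OF measurable_Pair2' this, of "restrict x (I - (a - b))"]
  have "(\<lambda>z. merge (a - b) (I - (a - b)) (z, x)) \<in> measurable (PiM (a - b) M) (PiM I M)"
    by (simp add: comp_def space_PiM space_M)
  from measurable_comp[OF this borel_measurable_partial_integral[OF a borel_measurable_integrable[OF g]]]
  have H: "H \<in> borel_measurable (PiM (a - b) M)"
    unfolding H_def[abs_def] by (simp add: comp_def)
  have "partial_integral I M (partial_integral I M g a) b x = (\<integral>z. H (restrict z (a - b)) \<partial>PiM (I - b) M)"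
    unfolding partial_integral_def[of _ _ "partial_integral I M g a"] H_def
    by (intro Bochner_Integration.integral_cong refl depends_only_onD[OF depends_only_on_partial_integral])
      (use a in \<open>auto simp: merge_def\<close>)
  also have "\<dots> = integral\<^sup>L (PiM (a - b) M) H"
    by (rule integral_PiM_restrict[OF fin(3) _ H]) (use a in auto)
  also have "\<dots> = (\<integral>z. (\<integral>z'. G (merge (a - b) (I - a) (z, z')) \<partial>PiM (I - a) M) \<partial>PiM (a - b) M)"
    unfolding H_def G_def partial_integral_def
    by (intro Bochner_Integration.integral_cong refl arg_cong[where f=g])
      (use a b in \<open>auto simp: merge_def fun_eq_iff\<close>)
  also have "\<dots> = integral\<^sup>L (PiM ((a - b) \<union> (I - a)) M) G"
    by (rule product_integral_fold[OF _ fin(1,2) G, symmetric]) auto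
  also have "\<dots> = partial_integral I M g (a \<inter> b) x"
    unfolding partial_integral_def G_def split ..
  finally show ?case .
qed

end

lemma partial_integral_full:
  assumes "x \<in> space (PiM I M)"
  shows "partial_integral I M g I x = g x"
proof -
  have "merge I {} (x, \<lambda>_. undefined) = x"
    using assms by (auto simp: merge_def space_PiM PiE_def extensional_def fun_eq_iff)
  then show ?thesis
    unfolding partial_integral_def by (simp add: PiM_empty lebesgue_integral_count_space_finite)
qed

locale anova_decomposition = partial_integral_space M I for M :: "'i \<Rightarrow> 'a measure" and I +
  fixes y :: "('i \<Rightarrow> 'a) \<Rightarrow> real" and A :: "'i set \<Rightarrow> ('i \<Rightarrow> 'a) \<Rightarrow> real"
  assumes square_integrable_y: "square_integrable (PiM I M) y"
    and anova_rec: "\<And>u x. u \<subseteq> I \<Longrightarrow> A u x = partial_integral I M y u x - (\<Sum>v | v \<subset> u. A v x)"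
begin

lemma integrable_y: "integrable (PiM I M) y"
  using square_integrable_y square_integrable_imp_integrable by (auto simp: square_integrable_def)

lemma finite_subset_index: "u \<subseteq> I \<Longrightarrow> finite u"
  using finite_index finite_subset by auto

lemma partial_integral_eq_sum_anova:
  assumes "u \<subseteq> I"
  shows "partial_integral I M y u x = (\<Sum>v | v \<subseteq> u. A v x)"
proof -
  have "{v. v \<subseteq> u} = insert u {v. v \<subset> u}"
    by auto
  then show ?thesis
    using anova_rec[OF assms] finite_psubsets[OF finite_subset_index[OF assms]] by simp
qed

lemma sum_anova: "x \<in> space (PiM I M) \<Longrightarrow> y x = (\<Sum>u | u \<subseteq> I. A u x)"
  using partial_integral_eq_sum_anova[of I x] partial_integral_full[of x I M y] by simp

lemma square_integrable_anova:
  assumes "u \<subseteq> I"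
  shows "square_integrable (PiM I M) (A u)"
  using finite_subset_index[OF assms] assms
proof (induction u rule: finite_psubset_induct)
  case (psubset u)
  have "square_integrable (PiM I M) (\<lambda>x. \<Sum>v | v \<subset> u. A v x)"
    using psubset by (intro square_integrable_sum finite_psubsets) auto
  with square_integrable_partial_integral[OF psubset(3) square_integrable_y]
  have "square_integrable (PiM I M) (\<lambda>x. partial_integral I M y u x - (\<Sum>v | v \<subset> u. A v x))"
    by (rule square_integrable_diff)
  then show ?case
    using anova_rec[OF psubset(3)] by simp
qed

lemma integrable_anova: "u \<subseteq> I \<Longrightarrow> integrable (PiM I M) (A u)"
  using square_integrable_anova square_integrable_imp_integrable unfolding square_integrable_def by blast

lemma depends_only_on_anova:
  assumes "u \<subseteq> I"
  shows "depends_only_on u (A u)"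
  using finite_subset_index[OF assms] assms
proof (induction u rule: finite_psubset_induct)
  case (psubset u)
  show ?case
    unfolding depends_only_on_def
  proof (intro allI impI)
    fix x x' :: "'i \<Rightarrow> 'a" assume eq: "\<forall>i\<in>u. x i = x' i"
    have "partial_integral I M y u x = partial_integral I M y u x'"
      by (rule depends_only_onD[OF depends_only_on_partial_integral]) (use eq in auto)
    moreover have "A v x = A v x'" if "v \<subset> u" for v
    proof -
      have "depends_only_on v (A v)"
        by (rule psubset(2)) (use that psubset(3) in auto)
      then show ?thesis
        by (rule depends_only_onD) (use eq that in auto)
    qed
    then have "(\<Sum>v | v \<subset> u. A v x) = (\<Sum>v | v \<subset> u. A v x')"
      by simp
    ultimately show "A u x = A u x'"
      using anova_rec[OF psubset(3)] by simp
  qed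
qed

lemma partial_integral_anova:
  assumes u: "u \<subseteq> I" and w: "w \<subseteq> I"
  shows "AE x in PiM I M. partial_integral I M (A u) w x =
    partial_integral I M y (u \<inter> w) x - (\<Sum>v | v \<subset> u. partial_integral I M (A v) w x)"
proof -
  have fin: "finite {v. v \<subset> u}"
    by (rule finite_psubsets[OF finite_subset_index[OF u]])
  have int: "integrable (PiM I M) (\<lambda>x. \<Sum>v | v \<subset> u. A v x)"
    using u by (intro Bochner_Integration.integrable_sum integrable_anova) auto
  have A: "A u = (\<lambda>x. partial_integral I M y u x - (\<Sum>v | v \<subset> u. A v x))"
    using anova_rec[OF u] by auto
  have sum: "AE x in PiM I M. partial_integral I M (\<lambda>x. \<Sum>v | v \<subset> u. A v x) w x =
      (\<Sum>v | v \<subset> u. partial_integral I M (A v) w x)"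
    using u by (intro partial_integral_sum[OF w fin] integrable_anova) auto
  show ?thesis
    using partial_integral_diff[OF w integrable_partial_integral[OF u integrable_y] int]
      partial_integral_partial_integral[OF u w integrable_y] sum
    unfolding A by eventually_elim simp
qed

text \<open>Integrating \<open>A u\<close> over coordinate \<open>i\<close> leaves \<open>y\<^bsub>u - {i}\<^esub>\<close> minus the components that avoid
\<open>i\<close> (those containing \<open>i\<close> vanish by induction), and these cancel exactly.\<close>

lemma partial_integral_anova_eq_0:
  assumes "u \<subseteq> I" "i \<in> u"
  shows "AE x in PiM I M. partial_integral I M (A u) (I - {i}) x = 0"
  using finite_subset_index[OF assms(1)] assms
proof (induction u arbitrary: i rule: finite_psubset_induct)
  case (psubset u)
  have "AE x in PiM I M. \<forall>v\<in>{v. v \<subset> u \<and> i \<in> v}. partial_integral I M (A v) (I - {i}) x = 0"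
    using psubset by (intro eventually_ball_finite) (auto intro: finite_subset[OF _ finite_psubsets])
  with partial_integral_anova[OF psubset(3) Diff_subset[of I "{i}"]]
  show ?case
  proof eventually_elim
    case (elim x)
    have "partial_integral I M (A v) (I - {i}) x = (if i \<in> v then 0 else A v x)" if "v \<subset> u" for v
    proof (cases "i \<in> v")
      case False
      with that psubset(3) have "depends_only_on (I - {i}) (A v)"
        by (intro depends_only_on_mono[OF depends_only_on_anova]) auto
      then show ?thesis
        using False by (simp add: partial_integral_depends_only_on)
    qed (use elim that in auto)
    then have "(\<Sum>v | v \<subset> u. partial_integral I M (A v) (I - {i}) x) = (\<Sum>v | v \<subseteq> u - {i}. A v x)"
      using sum_psubsets_avoiding[OF psubset(1,4)] by simp
    also have "\<dots> = partial_integral I M y (u \<inter> (I - {i})) x"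
    proof -
      have "u \<inter> (I - {i}) = u - {i}" "u - {i} \<subseteq> I"
        using psubset(3) by auto
      then show ?thesis
        by (simp add: partial_integral_eq_sum_anova)
    qed
    finally show ?case
      using elim by simp
  qed
qed

lemma anova_orthogonal:
  assumes u: "u \<subseteq> I" and w: "w \<subseteq> I" and "u \<noteq> w"
  shows "integral\<^sup>L (PiM I M) (\<lambda>x. A u x * A w x) = 0"
proof -
  have *: "integral\<^sup>L (PiM I M) (\<lambda>x. A u x * A w x) = 0"
    if u: "u \<subseteq> I" and w: "w \<subseteq> I" and i: "i \<in> u" "i \<notin> w" for u w i
  proof -
    have W: "I - {i} \<subseteq> I"
      by auto
    have dep: "depends_only_on (I - {i}) (A w)"
      using w i by (intro depends_only_on_mono[OF depends_only_on_anova]) auto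
    have "integral\<^sup>L (PiM I M) (\<lambda>x. A u x * A w x) =
        integral\<^sup>L (PiM I M) (partial_integral I M (\<lambda>x. A u x * A w x) (I - {i}))"
      using integral_partial_integral[OF W] square_integrable_anova u w
      by (simp add: integrable_mult_square_integrable)
    also have "\<dots> = integral\<^sup>L (PiM I M) (\<lambda>x. partial_integral I M (A u) (I - {i}) x * A w x)"
      by (intro Bochner_Integration.integral_cong refl partial_integral_mult_depends_only_on[OF dep])
    also have "\<dots> = 0"
    proof (rule integral_eq_zero_AE)
      show "AE x in PiM I M. partial_integral I M (A u) (I - {i}) x * A w x = 0"
        using partial_integral_anova_eq_0[OF u i(1)] by eventually_elim simp
    qed
    finally show ?thesis .
  qed
  from \<open>u \<noteq> w\<close> obtain i where "i \<in> u \<and> i \<notin> w \<or> i \<in> w \<and> i \<notin> u"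
    by blast
  then show ?thesis
    using *[OF u w] *[OF w u] by (auto simp: mult.commute)
qed

lemma integral_square_sum_anova:
  assumes "U \<subseteq> {u. u \<subseteq> I}"
  shows "integral\<^sup>L (PiM I M) (\<lambda>x. (\<Sum>u\<in>U. A u x)\<^sup>2) = (\<Sum>u\<in>U. integral\<^sup>L (PiM I M) (\<lambda>x. (A u x)\<^sup>2))"
proof -
  have U: "finite U" "\<And>u. u \<in> U \<Longrightarrow> u \<subseteq> I"
    using assms finite_index by (auto intro: finite_subset[of _ "Pow I"])
  have "integral\<^sup>L (PiM I M) (\<lambda>x. (\<Sum>u\<in>U. A u x)\<^sup>2) =
      (\<Sum>u\<in>U. \<Sum>w\<in>U. integral\<^sup>L (PiM I M) (\<lambda>x. A u x * A w x))"
    using U square_integrable_anova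
    by (simp add: power2_eq_square sum_product integrable_mult_square_integrable
        Bochner_Integration.integrable_sum)
  also have "\<dots> = (\<Sum>u\<in>U. \<Sum>w\<in>U. if w = u then integral\<^sup>L (PiM I M) (\<lambda>x. A u x * A u x) else 0)"
    using U anova_orthogonal by (intro sum.cong refl) auto
  also have "\<dots> = (\<Sum>u\<in>U. integral\<^sup>L (PiM I M) (\<lambda>x. A u x * A u x))"
    using U(1) by simp
  finally show ?thesis
    by (simp add: power2_eq_square)
qed

lemma truncation_error_eq:
  "integral\<^sup>L (PiM I M) (\<lambda>x. (y x - (\<Sum>u | u \<subseteq> I \<and> P u. A u x))\<^sup>2) =
    (\<Sum>u | u \<subseteq> I \<and> \<not> P u. integral\<^sup>L (PiM I M) (\<lambda>x. (A u x)\<^sup>2))"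
proof -
  have fin: "finite {u. u \<subseteq> I \<and> Q u}" for Q
    using finite_index by (auto intro: finite_subset[of _ "Pow I"])
  have split: "{u. u \<subseteq> I} = {u. u \<subseteq> I \<and> P u} \<union> {u. u \<subseteq> I \<and> \<not> P u}"
    by auto
  have "y x - (\<Sum>u | u \<subseteq> I \<and> P u. A u x) = (\<Sum>u | u \<subseteq> I \<and> \<not> P u. A u x)"
    if "x \<in> space (PiM I M)" for x
  proof -
    have "(\<Sum>u | u \<subseteq> I. A u x) = (\<Sum>u | u \<subseteq> I \<and> P u. A u x) + (\<Sum>u | u \<subseteq> I \<and> \<not> P u. A u x)"
      unfolding split by (rule sum.union_disjoint[OF fin fin]) auto
    with sum_anova[OF that] show ?thesis
      by simp
  qed
  then have "integral\<^sup>L (PiM I M) (\<lambda>x. (y x - (\<Sum>u | u \<subseteq> I \<and> P u. A u x))\<^sup>2) =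
      integral\<^sup>L (PiM I M) (\<lambda>x. (\<Sum>u | u \<subseteq> I \<and> \<not> P u. A u x)\<^sup>2)"
    by (intro Bochner_Integration.integral_cong refl) simp
  also have "\<dots> = (\<Sum>u | u \<subseteq> I \<and> \<not> P u. integral\<^sup>L (PiM I M) (\<lambda>x. (A u x)\<^sup>2))"
    by (rule integral_square_sum_anova) auto
  finally show ?thesis .
qed

end

lemma prob_space_density_lborel:
  fixes f :: "real \<Rightarrow> real"
  assumes "f \<in> borel_measurable borel" "\<And>t. 0 \<le> f t" "integrable lborel f" "integral\<^sup>L lborel f = 1"
  shows "prob_space (density lborel f)"
proof
  have "emeasure (density lborel f) (space (density lborel f)) = (\<integral>\<^sup>+t. ennreal (f t) \<partial>lborel)"
    using assms(1) by (simp add: emeasure_density)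
  also have "\<dots> = ennreal (integral\<^sup>L lborel f)"
    using assms(2,3) by (intro nn_integral_eq_integral) auto
  finally show "emeasure (density lborel f) (space (density lborel f)) = 1"
    using assms(4) by simp
qed

text \<open>The library's product-space locales need a probability measure at every index, so the
coordinates outside \<open>{1..N}\<close> get a dummy one; it never enters a product over a subset of
\<open>{1..N}\<close>.\<close>

lemma anova_decomposition_anova:
  fixes N :: nat and f :: "nat \<Rightarrow> real \<Rightarrow> real" and y :: "(nat \<Rightarrow> real) \<Rightarrow> real"
  defines "M \<equiv> \<lambda>i. density lborel (f i)"
  defines "M' \<equiv> \<lambda>i. if i \<in> {1..N} then M i else return lborel 0"
  assumes f_meas: "\<And>i. i \<in> {1..N} \<Longrightarrow> f i \<in> borel_measurable borel"
    and f_nonneg: "\<And>i t. i \<in> {1..N} \<Longrightarrow> 0 \<le> f i t"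
    and f_int1: "\<And>i. i \<in> {1..N} \<Longrightarrow> integrable lborel (f i) \<and> integral\<^sup>L lborel (f i) = 1"
    and y: "square_integrable (PiM {1..N} M) y"
  shows "anova_decomposition M' {1..N} y (anova N M y)"
proof -
  have PiM: "PiM J M = PiM J M'" if "J \<subseteq> {1..N}" for J
    using that by (intro PiM_cong) (auto simp: M'_def)
  have "prob_space (M' i)" for i
    using f_meas f_nonneg f_int1
    by (auto simp: M'_def M_def prob_space_return intro: prob_space_density_lborel)
  then interpret finite_product_prob_space M' "{1..N}"
    by (intro finite_product_prob_space.intro finite_product_sigma_finite.intro
        product_prob_space.intro product_sigma_finite.intro prob_space_imp_sigma_finite)
      (auto simp: finite_product_sigma_finite_axioms_def product_prob_space_axioms_def)
  show ?thesis
  proof unfold_locales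
    show "space (M' i) = UNIV" for i
      by (simp add: M'_def M_def)
    show "square_integrable (PiM {1..N} M') y"
      using y PiM by simp
    fix u x assume "u \<subseteq> {1..N}"
    moreover have "partial_int N M y u x = partial_integral {1..N} M' y u x"
      unfolding partial_int_def partial_integral_def by (simp add: PiM)
    ultimately show "anova N M y u x = partial_integral {1..N} M' y u x - (\<Sum>v | v \<subset> u. anova N M y v x)"
      using finite_subset by fastforce
  qed
qed

theorem proposition1:
  fixes N S :: nat and f :: "nat \<Rightarrow> real \<Rightarrow> real" and y :: "(nat \<Rightarrow> real) \<Rightarrow> real"
    and c q :: real
  defines "M \<equiv> (\<lambda>i. density lborel (f i))"
  defines "P \<equiv> PiM {1..N} M"
  assumes f_meas: "\<And>i. i \<in> {1..N} \<Longrightarrow> f i \<in> borel_measurable borel"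
    and f_nonneg: "\<And>i t. i \<in> {1..N} \<Longrightarrow> 0 \<le> f i t"
    and f_int1: "\<And>i. i \<in> {1..N} \<Longrightarrow> integrable lborel (f i) \<and> integral\<^sup>L lborel (f i) = 1"
    and y_meas: "y \<in> borel_measurable P"
    and y_sq: "integrable P (\<lambda>x. (y x)\<^sup>2)"
    and c_pos: "c > 0" and q_gt: "q > 1"
    and var_bound: "\<And>u. u \<subseteq> {1..N} \<Longrightarrow> u \<noteq> {} \<Longrightarrow>
        integral\<^sup>L P (\<lambda>x. (anova N M y u x)\<^sup>2) \<le> c * q powr (- real (card u))"
    and S_le: "S \<le> N"
  shows "integral\<^sup>L P (\<lambda>x. (y x - (\<Sum>u\<in>{u. u \<subseteq> {1..N} \<and> card u \<le> S}. anova N M y u x))\<^sup>2)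
           \<le> c * (\<Sum>s=S+1..N. real (N choose s) * q powr (- real s))"
proof -
  define M' where "M' i = (if i \<in> {1..N} then M i else return lborel 0)" for i
  interpret anova_decomposition M' "{1..N}" y "anova N M y"
    using anova_decomposition_anova[of N f y] f_meas f_nonneg f_int1 y_meas y_sq
    unfolding M'_def M_def P_def square_integrable_def by blast
  have P: "P = PiM {1..N} M'"
    unfolding P_def by (intro PiM_cong) (auto simp: M'_def)
  have "integral\<^sup>L P (\<lambda>x. (y x - (\<Sum>u | u \<subseteq> {1..N} \<and> card u \<le> S. anova N M y u x))\<^sup>2) =
      (\<Sum>u | u \<subseteq> {1..N} \<and> \<not> card u \<le> S. integral\<^sup>L P (\<lambda>x. (anova N M y u x)\<^sup>2))"
    unfolding P by (rule truncation_error_eq)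
  also have "\<dots> \<le> (\<Sum>u | u \<subseteq> {1..N} \<and> \<not> card u \<le> S. c * q powr (- real (card u)))"
    by (intro sum_mono var_bound) auto
  also have "\<dots> = c * (\<Sum>s=S+1..N. real (N choose s) * q powr (- real s))"
    using sum_subsets_card_gt[of "{1..N}" "\<lambda>s. q powr (- real s)" S]
    by (simp flip: sum_distrib_left)
  finally show ?thesis .
qed

end
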